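(* For all $k_1,k_2\in\mathbb{R}$ with $r:=\sqrt{k_1^2+k_2^2}\le1$, $$-\arccos(k_1)-\arccos(k_2)+\arccos(r)+\frac\pi2\le k_1+k_2-r.$$ *)

theory Defs
  imports Complex_Main
begin

end

theory Submission
  imports Defs
begin

text \<open>With \<open>g x = x + arccos x\<close> the claim reads \<open>g r + pi/2 \<le> g k\<^sub>1 + g k\<^sub>2\<close>.
  Since \<open>g' x = 1 - 1 / sqrt (1 - x\<^sup>2) \<le> 0\<close>, \<open>g\<close> is decreasing, so replacing \<open>k\<^sub>i\<close> by \<open>\<bar>k\<^sub>i\<bar>\<close>
  only strengthens the claim. For \<open>k\<^sub>1, k\<^sub>2 \<ge> 0\<close> fix \<open>k\<^sub>2\<close> and let \<open>x\<close> grow from \<open>0\<close> to \<open>k\<^sub>1\<close>: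
  the difference \<open>g x - g (sqrt (x\<^sup>2 + k\<^sub>2\<^sup>2))\<close> starts at \<open>pi/2 - g k\<^sub>2\<close> and has derivative
  \<open>x (\<psi> s - \<psi> x)\<close> with \<open>s = sqrt (x\<^sup>2 + k\<^sub>2\<^sup>2) \<ge> x\<close> and \<open>\<psi> t = (1 / sqrt (1 - t\<^sup>2) - 1) / t\<close>,
  which is nonnegative because \<open>\<psi> t = t / (sqrt (1 - t\<^sup>2) (1 + sqrt (1 - t\<^sup>2)))\<close> is increasing.\<close>

lemma has_real_derivative_arccos_plus_id:
  fixes x :: real
  assumes "- 1 < x" "x < 1"
  shows "((\<lambda>t. t + arccos t) has_real_derivative 1 - 1 / sqrt (1 - x\<^sup>2)) (at x)"
  using DERIV_add[OF DERIV_ident DERIV_arccos[OF assms]]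
  by (simp add: inverse_eq_divide)

lemma arccos_plus_id_antimono:
  fixes x y :: real
  assumes "- 1 \<le> x" "x \<le> y" "y \<le> 1"
  shows "y + arccos y \<le> x + arccos x"
proof (rule DERIV_nonpos_imp_decreasing_open[OF \<open>x \<le> y\<close>])
  fix t assume "x < t" "t < y"
  then have "((\<lambda>t. t + arccos t) has_real_derivative 1 - 1 / sqrt (1 - t\<^sup>2)) (at t)"
    using assms by (intro has_real_derivative_arccos_plus_id) auto
  moreover have "t\<^sup>2 < 1" using \<open>x < t\<close> \<open>t < y\<close> assms by (simp add: abs_square_less_1)
  then have "1 \<le> 1 / sqrt (1 - t\<^sup>2)" by (simp add: le_divide_eq_1)
  ultimately show "\<exists>d. ((\<lambda>t. t + arccos t) has_real_derivative d) (at t) \<and> d \<le> 0"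
    by force
next
  show "continuous_on {x..y} (\<lambda>t. t + arccos t)"
    using assms by (intro continuous_intros) auto
qed

lemma quotient_inverse_sqrt_one_minus_square_mono:
  fixes x y :: real
  assumes "0 < x" "x \<le> y" "y < 1"
  shows "(1 / sqrt (1 - x\<^sup>2) - 1) / x \<le> (1 / sqrt (1 - y\<^sup>2) - 1) / y"
proof -
  have rationalized: "(1 / sqrt (1 - t\<^sup>2) - 1) / t = t / (sqrt (1 - t\<^sup>2) * (1 + sqrt (1 - t\<^sup>2)))"
    if "0 < t" "t < 1" for t :: real
  proof -
    define b where "b = sqrt (1 - t\<^sup>2)"
    have "t\<^sup>2 < 1" using that by (simp add: power_less_one_iff)
    then have "b > 0" "b\<^sup>2 = 1 - t\<^sup>2" unfolding b_def by simp_all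
    then have "t * t = (1 - b) * (1 + b)" by (simp add: power2_eq_square algebra_simps)
    have "t / (b * (1 + b)) = (t * t) / (t * (b * (1 + b)))" using \<open>0 < t\<close> by simp
    also have "\<dots> = (1 - b) / (t * b)"
      unfolding \<open>t * t = (1 - b) * (1 + b)\<close> using \<open>b > 0\<close> by simp
    also have "\<dots> = (1 / b - 1) / t" using \<open>b > 0\<close> by (simp add: field_simps)
    finally show ?thesis unfolding b_def by simp
  qed
  have "x\<^sup>2 \<le> y\<^sup>2" "y\<^sup>2 < 1" using assms by (simp_all add: power_mono power_less_one_iff)
  then have "0 < sqrt (1 - y\<^sup>2)" "sqrt (1 - y\<^sup>2) \<le> sqrt (1 - x\<^sup>2)" "x\<^sup>2 \<le> 1" by simp_all
  then have "x / (sqrt (1 - x\<^sup>2) * (1 + sqrt (1 - x\<^sup>2)))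
      \<le> y / (sqrt (1 - y\<^sup>2) * (1 + sqrt (1 - y\<^sup>2)))"
    using assms by (intro frac_le mult_mono add_pos_nonneg mult_pos_pos) auto
  then show ?thesis using rationalized[of x] rationalized[of y] assms by simp
qed

lemma has_real_derivative_arccos_plus_id_sqrt:
  fixes x c :: real
  assumes "0 < x" "0 \<le> c" "x\<^sup>2 + c < 1"
  shows "((\<lambda>t. sqrt (t\<^sup>2 + c) + arccos (sqrt (t\<^sup>2 + c))) has_real_derivative
           (1 - 1 / sqrt (1 - (x\<^sup>2 + c))) * (x / sqrt (x\<^sup>2 + c))) (at x)"
proof -
  have pos: "0 < x\<^sup>2 + c" using assms by (simp add: add_pos_nonneg)
  have "((\<lambda>t. t\<^sup>2 + c) has_real_derivative 2 * x) (at x)"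
    by (auto intro!: derivative_eq_intros)
  from DERIV_chain2[where f = sqrt and g = "\<lambda>t. t\<^sup>2 + c", OF DERIV_real_sqrt[OF pos] this]
  have inner: "((\<lambda>t. sqrt (t\<^sup>2 + c)) has_real_derivative x / sqrt (x\<^sup>2 + c)) (at x)"
    by (simp add: field_simps)
  have "- 1 < sqrt (x\<^sup>2 + c)" "sqrt (x\<^sup>2 + c) < 1"
    using pos assms(3) by (auto intro: less_le_trans[OF _ real_sqrt_ge_zero])
  then have outer: "((\<lambda>t. t + arccos t) has_real_derivative 1 - 1 / sqrt (1 - (x\<^sup>2 + c)))
      (at (sqrt (x\<^sup>2 + c)))"
    using has_real_derivative_arccos_plus_id[of "sqrt (x\<^sup>2 + c)"] pos by simp
  show ?thesis using DERIV_chain2[OF outer inner] by simp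
qed

lemma arccos_plus_id_sqrt_sum_squares_nonneg:
  fixes k1 k2 :: real
  assumes "0 \<le> k1" "0 \<le> k2" "k1\<^sup>2 + k2\<^sup>2 \<le> 1"
  shows "sqrt (k1\<^sup>2 + k2\<^sup>2) + arccos (sqrt (k1\<^sup>2 + k2\<^sup>2)) + pi / 2
           \<le> k1 + arccos k1 + k2 + arccos k2"
proof -
  define c where "c = k2\<^sup>2"
  define F where "F = (\<lambda>x. x + arccos x - (sqrt (x\<^sup>2 + c) + arccos (sqrt (x\<^sup>2 + c))))"
  have "c \<ge> 0" unfolding c_def by simp
  have "F 0 \<le> F k1"
  proof (rule DERIV_nonneg_imp_increasing_open[OF \<open>0 \<le> k1\<close>])
    fix x assume "0 < x" "x < k1"
    define s where "s = sqrt (x\<^sup>2 + c)"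
    have "x\<^sup>2 < k1\<^sup>2" using \<open>x < k1\<close> \<open>0 < x\<close> by (simp add: power_strict_mono)
    then have "x\<^sup>2 + c < 1" using assms(3) unfolding c_def by linarith
    then have "s < 1" "s\<^sup>2 = x\<^sup>2 + c" unfolding s_def using \<open>c \<ge> 0\<close> by simp_all
    have "x \<le> s" unfolding s_def using \<open>c \<ge> 0\<close> \<open>0 < x\<close> by (simp add: real_le_rsqrt)
    have "((\<lambda>t. t + arccos t) has_real_derivative 1 - 1 / sqrt (1 - x\<^sup>2)) (at x)"
      using \<open>0 < x\<close> \<open>x \<le> s\<close> \<open>s < 1\<close> by (intro has_real_derivative_arccos_plus_id) auto
    from DERIV_diff[OF this has_real_derivative_arccos_plus_id_sqrt[OF \<open>0 < x\<close> \<open>c \<ge> 0\<close> \<open>x\<^sup>2 + c < 1\<close>]]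
    have "(F has_real_derivative (1 - 1 / sqrt (1 - x\<^sup>2)) - (1 - 1 / sqrt (1 - s\<^sup>2)) * (x / s))
        (at x)"
      unfolding F_def s_def[symmetric] \<open>s\<^sup>2 = x\<^sup>2 + c\<close> .
    moreover have "1 / sqrt (1 - x\<^sup>2) - 1 \<le> (1 / sqrt (1 - s\<^sup>2) - 1) * (x / s)"
    proof -
      have "x * ((1 / sqrt (1 - x\<^sup>2) - 1) / x) \<le> x * ((1 / sqrt (1 - s\<^sup>2) - 1) / s)"
        using quotient_inverse_sqrt_one_minus_square_mono[OF \<open>0 < x\<close> \<open>x \<le> s\<close> \<open>s < 1\<close>]
        by (rule mult_left_mono) (use \<open>0 < x\<close> in simp)
      then show ?thesis using \<open>0 < x\<close> by (simp add: mult.commute)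
    qed
    then have "0 \<le> (1 - 1 / sqrt (1 - x\<^sup>2)) - (1 - 1 / sqrt (1 - s\<^sup>2)) * (x / s)"
      using mult_minus_left[of "1 - 1 / sqrt (1 - s\<^sup>2)" "x / s"] by simp
    ultimately show "\<exists>d. (F has_real_derivative d) (at x) \<and> 0 \<le> d" by blast
  next
    have "k1 \<le> 1" using assms abs_square_le_1[of k1] zero_le_power2[of k2] by linarith
    have bounds: "- 1 \<le> sqrt (x\<^sup>2 + c)" "x\<^sup>2 + c \<le> 1" if "0 \<le> x" "x \<le> k1" for x
    proof -
      show "- 1 \<le> sqrt (x\<^sup>2 + c)" by (rule order.trans[OF _ real_sqrt_ge_zero]) (simp_all add: \<open>c \<ge> 0\<close>)
      have "x\<^sup>2 \<le> k1\<^sup>2" using that by (simp add: power_mono)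
      then show "x\<^sup>2 + c \<le> 1" using assms(3) unfolding c_def by simp
    qed
    show "continuous_on {0..k1} F"
      unfolding F_def using \<open>k1 \<le> 1\<close> by (intro continuous_intros) (auto intro: bounds)
  qed
  moreover have "F 0 = pi / 2 - (k2 + arccos k2)"
    unfolding F_def c_def using \<open>0 \<le> k2\<close> by (simp add: arccos_0)
  ultimately show ?thesis unfolding F_def c_def by linarith
qed

theorem lemmaC6:
  fixes k1 k2 :: real
  assumes "sqrt (k1\<^sup>2 + k2\<^sup>2) \<le> 1"
  shows "- arccos k1 - arccos k2 + arccos (sqrt (k1\<^sup>2 + k2\<^sup>2)) + pi / 2
           \<le> k1 + k2 - sqrt (k1\<^sup>2 + k2\<^sup>2)"
proof -
  have squares: "k1\<^sup>2 + k2\<^sup>2 \<le> 1" using assms by simp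
  then have "\<bar>k1\<bar> \<le> 1" "\<bar>k2\<bar> \<le> 1"
    using abs_square_le_1[of k1] abs_square_le_1[of k2] zero_le_power2[of k1] zero_le_power2[of k2]
    by linarith+
  then have "\<bar>k1\<bar> + arccos \<bar>k1\<bar> \<le> k1 + arccos k1" "\<bar>k2\<bar> + arccos \<bar>k2\<bar> \<le> k2 + arccos k2"
    by (auto intro: arccos_plus_id_antimono)
  moreover have "sqrt (k1\<^sup>2 + k2\<^sup>2) + arccos (sqrt (k1\<^sup>2 + k2\<^sup>2)) + pi / 2
      \<le> \<bar>k1\<bar> + arccos \<bar>k1\<bar> + \<bar>k2\<bar> + arccos \<bar>k2\<bar>"
    using arccos_plus_id_sqrt_sum_squares_nonneg[of "\<bar>k1\<bar>" "\<bar>k2\<bar>"] squares by simp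
  ultimately show ?thesis by linarith
qed

end
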